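(* Let $\delta>0$, suppose $\lim_kr_k=r\in[0,1]$, and let $\xi_k=I_k-(\theta(M_k)-\theta(M_{k-1}))$ for $k\ge1$. (a) If $r<1$, then $\frac{1}{b_n^3}\sum_{k=1}^nE[|\xi_k|^3\mid\mathcal{F}_{k-1}]\to0$ in probability, where $b_n^2=\log n$. (b) If $r=1$ and $\sum_{k=1}^\infty e_k=\infty$, where $e_k=(1-r_k)(1-r_{k+1})\cdots(1-r_{k+\delta-1})$, then $\frac{1}{b_n^3}\sum_{k=1}^nE[|\xi_k|^3\mid\mathcal{F}_{k-1}]\to0$ in probability, where $b_n^2=\sum_{k=1}^{m(n)}e_k$.
   Context: Let $\{X_n,n\ge1\}$ be independent, identically distributed random variables with values in $\mathbb{Z}_+=\{0,1,2,\dots\}$ such that $p_k=P[X_1=k]>0$ for every $k\in\mathbb{Z}_+$ (set $p_m=0$ for integers $m\le -1$). For $k\in\mathbb{Z}_+$ let $y_k=\sum_{i>k}p_i$, and set $y_m=1$ for integers $m\le-1$. Let $r_k=p_k/y_{k-1}$, $k\in\mathbb{Z}_+$, and $m(t)=\min\{j\in\mathbb{Z}_+: y_j<1/t\}$ for $t>0$. For the fixed integer $\delta$ define $s_k=p_{k+\delta}/y_{k-1}$ and $\theta(k)=\sum_{i=0}^k s_i$ for $k\in\mathbb{Z}_+$. Let $M_0=0$ and $M_n=\max\{X_1,\dots,X_n\}$ for $n\ge1$. Let $I_k=\mathbf{1}_{\{X_k>M_{k-1}+\delta\}}$. Let $\mathcal{F}_0=\{\emptyset,\Omega\}$ and $\mathcal{F}_n=\sigma(X_1,\dots,X_n)$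 for $n\ge1$. *)

theory Defs
  imports "HOL-Probability.Probability"
begin

definition yv :: "(nat \<Rightarrow> real) \<Rightarrow> int \<Rightarrow> real" where
  "yv p m = (if m < 0 then 1 else (\<Sum>i. p (nat m + 1 + i)))"

definition rr :: "(nat \<Rightarrow> real) \<Rightarrow> nat \<Rightarrow> real" where
  "rr p k = p k / yv p (int k - 1)"

definition mm :: "(nat \<Rightarrow> real) \<Rightarrow> real \<Rightarrow> nat" where
  "mm p t = (LEAST j::nat. yv p (int j) < 1 / t)"

definition ss :: "(nat \<Rightarrow> real) \<Rightarrow> nat \<Rightarrow> nat \<Rightarrow> real" where
  "ss p \<delta> k = p (k + \<delta>) / yv p (int k - 1)"

definition theta :: "(nat \<Rightarrow> real) \<Rightarrow> nat \<Rightarrow> nat \<Rightarrow> real" where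
  "theta p \<delta> k = (\<Sum>i\<le>k. ss p \<delta> i)"

definition maxX :: "(nat \<Rightarrow> 'a \<Rightarrow> nat) \<Rightarrow> nat \<Rightarrow> 'a \<Rightarrow> nat" where
  "maxX X n \<omega> = Max (insert 0 ((\<lambda>i. X i \<omega>) ` {1..n}))"

definition indI :: "(nat \<Rightarrow> 'a \<Rightarrow> nat) \<Rightarrow> nat \<Rightarrow> nat \<Rightarrow> 'a \<Rightarrow> real" where
  "indI X \<delta> k \<omega> = (if X k \<omega> > maxX X (k - 1) \<omega> + \<delta> then 1 else 0)"

definition xi :: "(nat \<Rightarrow> real) \<Rightarrow> (nat \<Rightarrow> 'a \<Rightarrow> nat) \<Rightarrow> nat \<Rightarrow> nat \<Rightarrow> 'a \<Rightarrow> real" where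
  "xi p X \<delta> k \<omega> = indI X \<delta> k \<omega>
      - (theta p \<delta> (maxX X k \<omega>) - theta p \<delta> (maxX X (k - 1) \<omega>))"

definition ee :: "(nat \<Rightarrow> real) \<Rightarrow> nat \<Rightarrow> nat \<Rightarrow> real" where
  "ee p \<delta> k = (\<Prod>j\<in>{k..<k + \<delta>}. 1 - rr p j)"

definition filt :: "'a measure \<Rightarrow> (nat \<Rightarrow> 'a \<Rightarrow> nat) \<Rightarrow> nat \<Rightarrow> 'a measure" where
  "filt M X n = sigma (space M) {X i -` A \<inter> space M | i A. i \<in> {1..n}}"

definition Ssum :: "'a measure \<Rightarrow> (nat \<Rightarrow> real) \<Rightarrow> (nat \<Rightarrow> 'a \<Rightarrow> nat) \<Rightarrow> nat \<Rightarrow> (nat \<Rightarrow> real) \<Rightarrow> nat \<Rightarrow> 'a \<Rightarrow> real" where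
  "Ssum M p X \<delta> b n \<omega> = (1 / b n ^ 3) *
     (\<Sum>k=1..n. real_cond_exp M (filt M X (k - 1)) (\<lambda>\<omega>'. \<bar>xi p X \<delta> k \<omega>'\<bar> ^ 3) \<omega>)"

definition conv_in_prob :: "'a measure \<Rightarrow> (nat \<Rightarrow> 'a \<Rightarrow> real) \<Rightarrow> bool" where
  "conv_in_prob M Y \<longleftrightarrow>
     (\<forall>e>0. (\<lambda>n. measure M {\<omega> \<in> space M. \<bar>Y n \<omega>\<bar> > e}) \<longlonglongrightarrow> 0)"

end

theory Submission
  imports Defs
begin

text \<open>
  Given \<open>\<F>\<^sub>k\<^sub>-\<^sub>1\<close>, the increment \<open>\<xi>\<^sub>k\<close> depends only on the level \<open>m = M\<^sub>k\<^sub>-\<^sub>1\<close> and on the fresh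
  value \<open>X\<^sub>k\<close>, so \<open>E[\<bar>\<xi>\<^sub>k\<bar>\<^sup>3 | \<F>\<^sub>k\<^sub>-\<^sub>1] = h(M\<^sub>k\<^sub>-\<^sub>1)\<close> with \<open>h(m) = \<Sum>\<^sub>j p\<^sub>j \<bar>\<xi>(m, j)\<bar>\<^sup>3\<close>.
  Taking expectations, \<open>\<Sum>\<^sub>k\<^sub>\<le>\<^sub>n E \<bar>\<xi>\<^sub>k\<bar>\<^sup>3 = \<Sum>\<^sub>m V\<^sub>n(m) h(m)\<close>, where \<open>V\<^sub>n(m)\<close> is the expected
  number of times \<open>k < n\<close> at which the running maximum sits at level \<open>m\<close>; one has
  \<open>V\<^sub>n(m) \<le> [m = 0] + r\<^sub>m / y\<^sub>m\<close> and \<open>V\<^sub>n(m) \<le> n\<^sup>2 p\<^sub>m\<close>.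
  If \<open>r < 1\<close>, then \<open>\<bar>\<xi>(m, j)\<bar>\<^sup>3\<close> grows at most like \<open>\<surd>(y\<^sub>m / y\<^sub>j\<^sub>-\<^sub>1)\<close> and \<open>h(m) = O(y\<^sub>m)\<close>;
  if \<open>r = 1\<close>, the tails \<open>y\<^sub>j\<close> eventually decay geometrically and
  \<open>h(m) = O(y\<^sub>m (e\<^sub>m\<^sub>+\<^sub>1 + \<dots> + e\<^sub>m\<^sub>+\<^sub>\<delta>))\<close>.
  Splitting the sum over \<open>m\<close> at \<open>m(n)\<close> gives \<open>\<Sum>\<^sub>k\<^sub>\<le>\<^sub>n E \<bar>\<xi>\<^sub>k\<bar>\<^sup>3 = O(b\<^sub>n\<^sup>2)\<close> in both cases,
  and Markov's inequality bounds the probability that the normalised sum of conditional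
  moments exceeds \<open>\<epsilon>\<close> by \<open>O(1 / (\<epsilon> b\<^sub>n))\<close>.
\<close>

lemma suminf_ennreal_le_telescoping:
  fixes f t :: "nat \<Rightarrow> real"
  assumes "\<And>j. 0 \<le> f j" and "\<And>j. f j \<le> t j - t (Suc j)" and "\<And>j. 0 \<le> t j"
  shows "(\<Sum>j. ennreal (f j)) \<le> ennreal (t 0)"
proof (rule suminf_le_const[OF summableI])
  fix n
  have "(\<Sum>j<n. ennreal (f j)) = ennreal (\<Sum>j<n. f j)" using assms(1) by simp
  also have "(\<Sum>j<n. f j) \<le> (\<Sum>j<n. t j - t (Suc j))"
    by (rule sum_mono) (use assms in auto)
  also have "\<dots> = t 0 - t n" by (rule sum_lessThan_telescope')
  also have "\<dots> \<le> t 0" using assms(3)[of n] by simp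
  finally show "(\<Sum>j<n. ennreal (f j)) \<le> ennreal (t 0)" by (simp add: ennreal_leI)
qed

lemma one_plus_cube_le_pow_8: "(1 + real t) ^ 3 \<le> 8 ^ t"
proof -
  have "1 + real t \<le> 2 ^ t"
    by (induction t) simp_all
  then have "(1 + real t) ^ 3 \<le> (2 ^ t) ^ 3" by (rule power_mono) simp
  also have "\<dots> = 8 ^ t" by (simp flip: power_mult add: mult.commute[of t 3] power_mult)
  finally show ?thesis .
qed

lemma one_plus_cube_le_exp:
  fixes x :: real
  assumes x: "x \<ge> 0"
  shows "(1 + x) ^ 3 \<le> 216 * exp (x / 2)"
proof -
  have "1 + x \<le> 6 * exp (x / 6)" using exp_ge_add_one_self[of "x / 6"] x by linarith
  then have "(1 + x) ^ 3 \<le> (6 * exp (x / 6)) ^ 3" by (rule power_mono) (use x in simp)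
  also have "\<dots> = 216 * exp (real 3 * (x / 6))" by (simp add: power_mult_distrib exp_of_nat_mult[symmetric])
  finally show ?thesis by simp
qed

lemma sum_power_Suc_diff_le:
  fixes a b :: real
  assumes "0 \<le> b" "b \<le> a" "a < 1"
  shows "(\<Sum>k<n. a ^ Suc k - b ^ Suc k) \<le> a / (1 - a) - b / (1 - b)"
proof -
  have geom: "(\<Sum>k<n. x ^ Suc k) = x / (1 - x) - x ^ Suc n / (1 - x)" if "x < 1" for x :: real
  proof -
    have "(\<Sum>k<n. x ^ Suc k) = x * (\<Sum>k<n. x ^ k)" by (simp add: sum_distrib_left)
    also have "\<dots> = x * ((x ^ n - 1) / (x - 1))" using that by (simp add: geometric_sum)
    also have "\<dots> = x * ((1 - x ^ n) / (1 - x))"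
      by (metis minus_diff_eq minus_divide_divide)
    finally have "(\<Sum>k<n. x ^ Suc k) = x * ((1 - x ^ n) / (1 - x))" .
    then show ?thesis by (simp add: diff_divide_distrib right_diff_distrib)
  qed
  have "b ^ Suc n / (1 - b) \<le> a ^ Suc n / (1 - a)"
    by (rule frac_le) (use assms power_mono[of b a "Suc n"] in auto)
  then show ?thesis using geom[of a] geom[of b] assms by (simp add: sum_subtractf)
qed

lemma power_diff_le_mult_diff:
  fixes a b :: real
  assumes "0 \<le> b" "b \<le> a" "a \<le> 1"
  shows "a ^ k - b ^ k \<le> real k * (a - b)"
proof (induction k)
  case (Suc k)
  have "0 \<le> a ^ k - b ^ k" using assms by (simp add: power_mono)
  then have "a * (a ^ k - b ^ k) \<le> a ^ k - b ^ k"
    using assms by (simp add: mult_left_le_one_le)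
  moreover have "b ^ k * (a - b) \<le> a - b"
    using assms by (simp add: mult_left_le_one_le power_le_one)
  moreover have "a ^ Suc k - b ^ Suc k = a * (a ^ k - b ^ k) + b ^ k * (a - b)"
    by (simp add: algebra_simps)
  ultimately show ?case using Suc by (simp add: algebra_simps)
qed simp

lemma affine_div_sqrt_cube_le:
  fixes A B e x :: real
  assumes "0 \<le> A" "0 \<le> B" "0 < e" "1 \<le> x"
  shows "(A + B * x) / (sqrt x ^ 3 * e) \<le> (A + B) / e * inverse (sqrt x)"
proof -
  have "sqrt x ^ 3 = x * sqrt x"
    using assms by (simp add: power3_eq_cube real_sqrt_mult_self)
  then have "(A + B * x) / (sqrt x ^ 3 * e) = (A + B * x) / (x * sqrt x * e)" by simp
  also have "\<dots> \<le> (A + B) * x / (x * sqrt x * e)"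
    using assms by (intro divide_right_mono) (simp_all add: algebra_simps mult_le_cancel_left1)
  also have "\<dots> = (A + B) / e * inverse (sqrt x)"
    using assms by (simp add: field_simps)
  finally show ?thesis .
qed

lemma sum_if_less_le:
  fixes a :: real and f :: "nat \<Rightarrow> real"
  assumes "0 \<le> a" and "\<And>m. 0 \<le> f m"
  shows "(\<Sum>m\<le>K. if m < m0 then a else f m) \<le> a * real m0 + (\<Sum>m\<le>K. f m)"
proof -
  have "(\<Sum>m\<le>K. if m < m0 then a else f m) \<le> (\<Sum>m\<le>K. (if m < m0 then a else 0) + f m)"
    using assms by (intro sum_mono) auto
  also have "\<dots> = a * real (card ({..K} \<inter> {..<m0})) + (\<Sum>m\<le>K. f m)"
    by (simp add: sum.distrib sum.If_cases Int_def)
  also have "\<dots> \<le> a * real m0 + (\<Sum>m\<le>K. f m)"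
    using card_mono[of "{..<m0}" "{..K} \<inter> {..<m0}"] assms(1) by (auto intro: mult_left_mono)
  finally show ?thesis .
qed

section \<open>Tail probabilities\<close>

locale positive_law =
  fixes p :: "nat \<Rightarrow> real"
  assumes p_pos: "\<And>k. p k > 0" and p_sums: "p sums 1"
begin

definition y :: "nat \<Rightarrow> real" where "y m = yv p (int m)"

text \<open>\<open>Y m\<close> is the paper's \<open>y\<^sub>m\<^sub>-\<^sub>1\<close>, the probability of \<open>X\<^sub>1 \<ge> m\<close>.\<close>
definition Y :: "nat \<Rightarrow> real" where "Y m = yv p (int m - 1)"

lemma p_summable: "summable p"
  using p_sums sums_summable by blast

lemma y_eq_suminf: "y m = (\<Sum>i. p (m + 1 + i))"
  unfolding y_def yv_def by simp

lemma y_eq_1_minus_sum: "y m = 1 - (\<Sum>i<Suc m. p i)"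
proof -
  have "(\<Sum>n. p (n + Suc m)) = suminf p - (\<Sum>i<Suc m. p i)"
    by (rule suminf_minus_initial_segment[OF p_summable])
  then show ?thesis
    unfolding y_eq_suminf using sums_unique[OF p_sums] by (simp add: add.commute)
qed

lemma y_sums: "(\<lambda>i. p (m + 1 + i)) sums y m"
proof -
  have "summable (\<lambda>i. p (m + 1 + i))"
    using summable_ignore_initial_segment[OF p_summable, of "m + 1"] by (simp add: add.commute)
  then show ?thesis unfolding y_eq_suminf by (rule summable_sums)
qed

lemma y_pos: "y m > 0"
  using y_sums[of m] p_pos by (metis sums_unique suminf_pos sums_summable)

lemma Y_0: "Y 0 = 1"
  unfolding Y_def yv_def by simp

lemma Y_Suc: "Y (Suc m) = y m"
  unfolding Y_def y_def by simp

lemma Y_pos: "Y m > 0"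
  by (cases m) (auto simp: Y_0 Y_Suc y_pos)

lemma y_eq_Y_minus_p: "y m = Y m - p m"
  by (cases m) (simp_all add: y_eq_1_minus_sum Y_0 Y_Suc)

lemma Y_Suc_eq_diff: "Y (Suc m) = Y m - p m"
  using y_eq_Y_minus_p Y_Suc by simp

lemma p_le_Y: "p m \<le> Y m"
  using y_eq_Y_minus_p y_pos by (metis diff_ge_0_iff_ge less_eq_real_def)

lemma Y_antimono: "m \<le> n \<Longrightarrow> Y n \<le> Y m"
proof (induction n rule: dec_induct)
  case (step n)
  then show ?case using Y_Suc_eq_diff[of n] p_pos[of n] by linarith
qed simp

lemma Y_le_1: "Y m \<le> 1"
  using Y_antimono[of 0 m] Y_0 by simp

lemma y_le_Y: "y m \<le> Y m"
  using Y_Suc Y_antimono[of m "Suc m"] by simp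

lemma y_antimono: "m \<le> n \<Longrightarrow> y n \<le> y m"
  using Y_antimono[of "Suc m" "Suc n"] by (simp add: Y_Suc)

lemma y_tendsto_0: "y \<longlonglongrightarrow> 0"
proof -
  have "(\<lambda>m. \<Sum>i<Suc m. p i) \<longlonglongrightarrow> 1"
    using p_sums unfolding sums_def by (rule LIMSEQ_Suc)
  then have "(\<lambda>m. 1 - (\<Sum>i<Suc m. p i)) \<longlonglongrightarrow> 1 - 1"
    by (intro tendsto_intros)
  then show ?thesis unfolding y_eq_1_minus_sum by simp
qed

lemma rr_eq: "rr p m = p m / Y m"
  unfolding rr_def Y_def by simp

lemma ss_eq: "ss p d m = p (m + d) / Y m"
  unfolding ss_def Y_def by simp

lemma Y_Suc_eq_mult: "Y (Suc m) = Y m * (1 - rr p m)"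
  using Y_pos[of m] by (simp add: rr_eq Y_Suc_eq_diff field_simps)

lemma rr_nonneg: "rr p m \<ge> 0"
  using p_pos[of m] Y_pos[of m] by (simp add: rr_eq)

lemma rr_less_1: "rr p m < 1"
  using p_pos[of m] Y_pos[of "Suc m"] by (simp add: rr_eq Y_Suc_eq_diff)

lemma ee_eq: "ee p d k = Y (k + d) / Y k"
proof (induction d)
  case 0
  then show ?case using Y_pos[of k] by (simp add: ee_def)
next
  case (Suc d)
  have "ee p (Suc d) k = ee p d k * (1 - rr p (k + d))"
    unfolding ee_def by (simp add: prod.atLeastLessThan_Suc)
  also have "\<dots> = Y (k + Suc d) / Y k"
    using Suc Y_pos[of k] by (simp add: Y_Suc_eq_mult)
  finally show ?case .
qed

lemma ee_nonneg: "ee p d k \<ge> 0"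
  using Y_pos by (simp add: ee_eq less_eq_real_def)

lemma ee_le_1: "ee p d k \<le> 1"
  using Y_pos[of k] Y_antimono[of k "k + d"] by (simp add: ee_eq)

lemma ss_nonneg: "ss p d m \<ge> 0"
  using p_pos Y_pos by (simp add: ss_eq less_eq_real_def)

lemma ss_le_ee: "ss p d m \<le> ee p d m"
  using p_le_Y[of "m + d"] Y_pos[of m] by (simp add: ss_eq ee_eq divide_right_mono)

lemma ss_le_1: "ss p d m \<le> 1"
  using ss_le_ee ee_le_1 order_trans by blast

lemma ss_le_rr: "ss p d m \<le> rr p (m + d)"
  using Y_antimono[of m "m + d"] Y_pos[of "m + d"] p_pos[of "m + d"]
  by (simp add: ss_eq rr_eq frac_le)

lemma Y_le_exp_sum_rr: "a \<le> b \<Longrightarrow> Y b \<le> Y a * exp (- (\<Sum>l\<in>{a..<b}. rr p l))"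
proof (induction b rule: dec_induct)
  case (step b)
  have "Y (Suc b) \<le> Y b * exp (- rr p b)"
    using Y_Suc_eq_mult[of b] exp_ge_add_one_self[of "- rr p b"] Y_pos[of b]
    by (simp add: mult_left_mono)
  also have "\<dots> \<le> Y a * exp (- (\<Sum>l\<in>{a..<b}. rr p l)) * exp (- rr p b)"
    by (rule mult_right_mono[OF step.IH]) simp
  also have "\<dots> = Y a * exp (- (\<Sum>l\<in>{a..<Suc b}. rr p l))"
    using step.hyps by (simp add: exp_add[symmetric] exp_minus_inverse mult.assoc)
  finally show ?case .
qed simp

section \<open>The conditional third moment of \<open>\<xi>\<^sub>k\<close>\<close>

text \<open>The value of \<open>\<xi>\<^sub>k\<close> on the event \<open>{M\<^sub>k\<^sub>-\<^sub>1 = m, X\<^sub>k = j}\<close>.\<close>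
definition xi_at :: "nat \<Rightarrow> nat \<Rightarrow> nat \<Rightarrow> real" where
  "xi_at d m j = (if j > m + d then 1 else 0) - (theta p d (max m j) - theta p d m)"

definition cube_moment :: "nat \<Rightarrow> nat \<Rightarrow> ennreal" where
  "cube_moment d m = (\<Sum>j. ennreal (p j * \<bar>xi_at d m j\<bar> ^ 3))"

definition theta_incr :: "nat \<Rightarrow> nat \<Rightarrow> nat \<Rightarrow> real" where
  "theta_incr d m j = (\<Sum>i\<in>{m<..j}. ss p d i)"

definition ee_window :: "nat \<Rightarrow> nat \<Rightarrow> real" where
  "ee_window d m = (\<Sum>i\<in>{m<..m + d}. ee p d i)"

lemma theta_incr_nonneg: "theta_incr d m j \<ge> 0"
  unfolding theta_incr_def by (rule sum_nonneg) (use ss_nonneg in auto)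

lemma theta_incr_le: "theta_incr d m j \<le> real (j - m)"
  using sum_bounded_above[of "{m<..j}" "ss p d" 1] ss_le_1 by (simp add: theta_incr_def)

lemma theta_incr_le_ee_window: "j \<le> m + d \<Longrightarrow> theta_incr d m j \<le> ee_window d m"
  unfolding theta_incr_def ee_window_def
  by (rule order_trans[OF sum_mono[OF ss_le_ee] sum_mono2]) (use ee_nonneg in auto)

lemma ee_window_nonneg: "ee_window d m \<ge> 0"
  unfolding ee_window_def by (rule sum_nonneg) (use ee_nonneg in auto)

lemma ee_window_le: "ee_window d m \<le> real d"
  using sum_bounded_above[of "{m<..m + d}" "ee p d" 1] ee_le_1 by (simp add: ee_window_def)

lemma ee_Suc_le_ee_window: "d > 0 \<Longrightarrow> ee p d (Suc m) \<le> ee_window d m"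
  unfolding ee_window_def by (rule member_le_sum) (use ee_nonneg in auto)

lemma xi_at_eq_0: "j \<le> m \<Longrightarrow> xi_at d m j = 0"
  unfolding xi_at_def by (simp add: max_absorb1)

lemma xi_at_eq: "m < j \<Longrightarrow> xi_at d m j = (if j > m + d then 1 else 0) - theta_incr d m j"
proof -
  assume "m < j"
  then have "{..j} = {..m} \<union> {m<..j}" by auto
  then have "theta p d j = theta p d m + theta_incr d m j"
    unfolding theta_def theta_incr_def by (simp add: sum.union_disjoint ivl_disj_int)
  then show ?thesis using \<open>m < j\<close> by (simp add: xi_at_def max_absorb2)
qed

lemma abs_xi_at_cube_le: "m < j \<Longrightarrow> \<bar>xi_at d m j\<bar> ^ 3 \<le> (1 + theta_incr d m j) ^ 3"
  using theta_incr_nonneg[of d m j] by (intro power_mono) (auto simp: xi_at_eq)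

lemma abs_xi_at_cube_le_card: "m < j \<Longrightarrow> \<bar>xi_at d m j\<bar> ^ 3 \<le> (1 + real (j - m)) ^ 3"
  using abs_xi_at_cube_le[of m j d] power_mono[of "1 + theta_incr d m j" "1 + real (j - m)" 3]
    theta_incr_le[of d m j] theta_incr_nonneg[of d m j] by linarith

lemma cube_moment_summand_nonneg: "0 \<le> p j * \<bar>xi_at d m j\<bar> ^ 3"
  using p_pos[of j] by simp

section \<open>How long the running maximum stays at a level\<close>

text \<open>With \<open>F\<close> the distribution function of \<open>X\<^sub>1\<close>, \<open>P(M\<^sub>k = m) = F(m)\<^sup>k - F(m - 1)\<^sup>k\<close> for \<open>k \<ge> 1\<close>;
  note that \<open>1 - y m = F(m)\<close> and \<open>1 - Y m = F(m - 1)\<close>.\<close>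
definition max_pmf :: "nat \<Rightarrow> nat \<Rightarrow> real" where
  "max_pmf k m = (if k = 0 then (if m = 0 then 1 else 0) else (1 - y m) ^ k - (1 - Y m) ^ k)"

text \<open>The expected number of \<open>k < n\<close> with \<open>M\<^sub>k = m\<close>, counting \<open>M\<^sub>0 = 0\<close>.\<close>
definition occupation :: "nat \<Rightarrow> nat \<Rightarrow> real" where
  "occupation n m = (\<Sum>k<n. max_pmf k m)"

lemma max_pmf_nonneg: "0 \<le> max_pmf k m"
  unfolding max_pmf_def using Y_le_1[of m] y_le_Y[of m] by (auto intro: power_mono)

lemma occupation_le_rr_div_y: "occupation n m \<le> (if m = 0 then 1 else 0) + rr p m / y m"
proof -
  have "occupation n m \<le> occupation (Suc n) m"
    unfolding occupation_def using max_pmf_nonneg[of n m] by simp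
  also have "\<dots> = (if m = 0 then 1 else 0) + (\<Sum>k<n. (1 - y m) ^ Suc k - (1 - Y m) ^ Suc k)"
    unfolding occupation_def by (subst sum.lessThan_Suc_shift) (simp add: max_pmf_def)
  also have "(\<Sum>k<n. (1 - y m) ^ Suc k - (1 - Y m) ^ Suc k)
      \<le> (1 - y m) / (1 - (1 - y m)) - (1 - Y m) / (1 - (1 - Y m))"
    using Y_le_1[of m] y_le_Y[of m] y_pos[of m] by (intro sum_power_Suc_diff_le) auto
  also have "\<dots> = rr p m / y m"
    using y_pos[of m] Y_pos[of m] y_eq_Y_minus_p[of m] by (simp add: rr_eq field_simps)
  finally show ?thesis by simp
qed

lemma occupation_le_p: "m > 0 \<Longrightarrow> occupation n m \<le> real n ^ 2 * p m"
proof -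
  assume "m > 0"
  have "max_pmf k m \<le> real n * p m" if "k < n" for k
  proof (cases "k = 0")
    case False
    have "(1 - y m) ^ k - (1 - Y m) ^ k \<le> real k * ((1 - y m) - (1 - Y m))"
      using Y_le_1[of m] y_le_Y[of m] y_pos[of m] by (intro power_diff_le_mult_diff) auto
    also have "\<dots> \<le> real n * p m"
      using that p_pos[of m] y_eq_Y_minus_p[of m] by (simp add: mult_right_mono)
    finally show ?thesis using False by (simp add: max_pmf_def)
  qed (use \<open>m > 0\<close> p_pos[of m] in \<open>simp add: max_pmf_def\<close>)
  then have "occupation n m \<le> (\<Sum>k<n. real n * p m)"
    unfolding occupation_def by (intro sum_mono) auto
  then show ?thesis by (simp add: power2_eq_square)
qed

lemma y_mm_less: "n \<ge> 1 \<Longrightarrow> y (mm p (real n)) < 1 / real n"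
proof -
  assume "n \<ge> 1"
  then have "eventually (\<lambda>j. y j < 1 / real n) sequentially"
    using y_tendsto_0 by (intro order_tendstoD) auto
  then have "\<exists>j. y j < 1 / real n" by (auto dest: eventually_happens)
  then show ?thesis unfolding mm_def y_def[symmetric] by (rule LeastI_ex)
qed

lemma Y_mm_ge: "n \<ge> 1 \<Longrightarrow> Y (mm p (real n)) \<ge> 1 / real n"
proof (cases "mm p (real n)")
  case (Suc k)
  then have "\<not> y k < 1 / real n"
    using not_less_Least[of k "\<lambda>j. y j < 1 / real n"] unfolding mm_def y_def[symmetric] by auto
  then show ?thesis using Suc by (simp add: Y_Suc)
qed (simp add: Y_0)

lemma sum_rr_le_ln: "n \<ge> 1 \<Longrightarrow> (\<Sum>m\<le>mm p (real n). rr p m) \<le> ln (real n) + 1"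
proof -
  assume n: "n \<ge> 1"
  define mn where "mn = mm p (real n)"
  have "1 / real n \<le> exp (- (\<Sum>l<mn. rr p l))"
    using Y_mm_ge[OF n] Y_le_exp_sum_rr[of 0 mn] unfolding mn_def by (simp add: Y_0 atLeast0LessThan)
  then have "ln (1 / real n) \<le> ln (exp (- (\<Sum>l<mn. rr p l)))"
    using n by (subst ln_le_cancel_iff) auto
  then have "ln (1 / real n) \<le> - (\<Sum>l<mn. rr p l)" by simp
  then have "(\<Sum>l<mn. rr p l) \<le> ln (real n)" using n by (simp add: ln_div)
  then show ?thesis
    using rr_less_1[of mn] unfolding mn_def by (simp add: lessThan_Suc_atMost[symmetric])
qed

lemma occupation_mult_le:
  assumes h: "h m \<le> ennreal (c * y m)" and c: "c \<ge> 0"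
  shows "ennreal (occupation n m) * h m \<le> ennreal (c * ((if m = 0 then 1 else 0) + rr p m))"
proof -
  have "ennreal (occupation n m) * h m
      \<le> ennreal ((if m = 0 then 1 else 0) + rr p m / y m) * ennreal (c * y m)"
    using occupation_le_rr_div_y h by (intro mult_mono ennreal_leI) auto
  also have "\<dots> = ennreal (((if m = 0 then 1 else 0) + rr p m / y m) * (c * y m))"
    using rr_nonneg[of m] y_pos[of m] c by (simp add: ennreal_mult)
  also have "((if m = 0 then 1 else 0) + rr p m / y m) * (c * y m)
      = c * ((if m = 0 then y m else 0) + rr p m)"
    using y_pos[of m] by (simp add: field_simps)
  also have "\<dots> \<le> ennreal (c * ((if m = 0 then 1 else 0) + rr p m))"
    using y_le_Y[of m] Y_le_1[of m] c by (intro ennreal_leI mult_left_mono) auto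
  finally show ?thesis .
qed

text \<open>Beyond \<open>m(n)\<close> the maximum is rarely seen: there \<open>n\<^sup>2 y\<^sub>m(\<^sub>n\<^sub>)\<^sup>2 \<le> 1\<close>.\<close>
lemma occupation_tail_le:
  assumes n: "n \<ge> 1" and C: "C \<ge> 0" and h: "\<And>m. h m \<le> ennreal (C * y m)"
  defines "mn \<equiv> mm p (real n)"
  shows "(\<Sum>i. ennreal (occupation n (i + Suc mn)) * h (i + Suc mn)) \<le> ennreal C"
proof -
  have "ennreal (occupation n (i + Suc mn)) * h (i + Suc mn)
      \<le> ennreal (real n ^ 2 * C * y mn) * ennreal (p (mn + 1 + i))" for i
  proof -
    have "C * y (i + Suc mn) \<le> C * y mn"
      using y_antimono[of mn "i + Suc mn"] C by (simp add: mult_left_mono)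
    then have "h (i + Suc mn) \<le> ennreal (C * y mn)"
      using h[of "i + Suc mn"] by (meson ennreal_leI order_trans)
    then have "ennreal (occupation n (i + Suc mn)) * h (i + Suc mn)
        \<le> ennreal (real n ^ 2 * p (i + Suc mn)) * ennreal (C * y mn)"
      using occupation_le_p[of "i + Suc mn" n] by (intro mult_mono ennreal_leI) auto
    also have "\<dots> = ennreal (real n ^ 2 * C * y mn * p (mn + 1 + i))"
      using p_pos[of "i + Suc mn"] y_pos[of mn] C
      by (subst ennreal_mult[symmetric]) (auto simp: algebra_simps)
    also have "\<dots> = ennreal (real n ^ 2 * C * y mn) * ennreal (p (mn + 1 + i))"
      using p_pos[of "mn + 1 + i"] y_pos[of mn] C by (subst ennreal_mult) auto
    finally show ?thesis .
  qed
  then have "(\<Sum>i. ennreal (occupation n (i + Suc mn)) * h (i + Suc mn))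
      \<le> (\<Sum>i. ennreal (real n ^ 2 * C * y mn) * ennreal (p (mn + 1 + i)))"
    by (rule suminf_le[OF _ summableI summableI])
  also have "\<dots> = ennreal (real n ^ 2 * C * y mn) * (\<Sum>i. ennreal (p (mn + 1 + i)))"
    by simp
  also have "(\<Sum>i. ennreal (p (mn + 1 + i))) = ennreal (y mn)"
    by (rule suminf_ennreal_eq[OF _ y_sums]) (use p_pos in \<open>simp add: less_imp_le\<close>)
  also have "ennreal (real n ^ 2 * C * y mn) * ennreal (y mn) \<le> ennreal C"
  proof -
    have "real n * y mn \<le> 1"
      using y_mm_less[OF n] n unfolding mn_def by (simp add: field_simps)
    then have "real n ^ 2 * C * y mn * y mn \<le> C"
      using power_le_one[of "real n * y mn" 2] y_pos[of mn] C
      by (simp add: power2_eq_square algebra_simps mult_left_le)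
    then show ?thesis
      using y_pos[of mn] C by (subst ennreal_mult[symmetric]) (auto intro: ennreal_leI)
  qed
  finally show ?thesis .
qed

lemma occupation_weighted_sum_le:
  assumes n: "n \<ge> 1" and "C \<ge> 0" and "\<And>m. h m \<le> ennreal (C * y m)"
    and "\<And>m. c m \<ge> 0" and "\<And>m. h m \<le> ennreal (c m * y m)"
  shows "(\<Sum>m. ennreal (occupation n m) * h m)
    \<le> ennreal ((\<Sum>m\<le>mm p (real n). c m * ((if m = 0 then 1 else 0) + rr p m)) + C)"
proof -
  define mn where "mn = mm p (real n)"
  define f where "f m = ennreal (occupation n m) * h m" for m
  have "(\<Sum>m. f m) = (\<Sum>i. f (i + Suc mn)) + (\<Sum>m<Suc mn. f m)"
    by (rule suminf_offset[OF summableI])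
  also have "(\<Sum>i. f (i + Suc mn)) \<le> ennreal C"
    unfolding f_def mn_def by (rule occupation_tail_le) (use assms in auto)
  also have "(\<Sum>m<Suc mn. f m) \<le> (\<Sum>m\<le>mn. ennreal (c m * ((if m = 0 then 1 else 0) + rr p m)))"
    unfolding f_def lessThan_Suc_atMost by (intro sum_mono occupation_mult_le) (use assms in auto)
  finally show ?thesis
    using assms rr_nonneg unfolding mn_def by (simp add: f_def add.commute sum_nonneg)
qed

section \<open>The case \<open>r < 1\<close>\<close>

lemma p_div_sqrt_Y_le: "p j / sqrt (Y j) \<le> 2 * (sqrt (Y j) - sqrt (Y (Suc j)))"
proof -
  have "p j = (sqrt (Y j) - sqrt (Y (Suc j))) * (sqrt (Y j) + sqrt (Y (Suc j)))"
    using Y_pos[of j] Y_pos[of "Suc j"] by (simp add: algebra_simps Y_Suc_eq_diff)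
  also have "\<dots> \<le> (sqrt (Y j) - sqrt (Y (Suc j))) * (2 * sqrt (Y j))"
    using Y_antimono[of j "Suc j"] by (intro mult_left_mono) auto
  finally show ?thesis using Y_pos[of j] by (simp add: field_simps)
qed

lemma rr_le_1_minus_const:
  assumes "(\<lambda>k. rr p k) \<longlonglongrightarrow> r" and "r < 1"
  obtains c where "c > 0" and "\<And>l. rr p l \<le> 1 - c"
proof -
  have "eventually (\<lambda>l. rr p l < (1 + r) / 2) sequentially"
    using assms by (intro order_tendstoD) auto
  then obtain N where N: "\<And>l. l \<ge> N \<Longrightarrow> rr p l < (1 + r) / 2"
    by (auto simp: eventually_sequentially)
  define c where "c = Min (insert ((1 - r) / 2) ((\<lambda>l. 1 - rr p l) ` {..<N}))"
  have "c > 0" unfolding c_def using assms(2) rr_less_1 by (subst Min_gr_iff) auto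
  moreover have "rr p l \<le> 1 - c" for l
  proof (cases "l < N")
    case True
    then have "c \<le> 1 - rr p l" unfolding c_def by (intro Min_le) auto
    then show ?thesis by simp
  next
    case False
    have "c \<le> (1 - r) / 2" unfolding c_def by (intro Min_le) auto
    then show ?thesis using N[of l] False by simp
  qed
  ultimately show ?thesis by (rule that)
qed

context
  fixes c :: real
  assumes c_pos: "c > 0" and rr_le: "\<And>l. rr p l \<le> 1 - c"
begin

lemma pow_mult_Y_le_Y_add: "c ^ k * Y j \<le> Y (j + k)"
proof (induction k)
  case (Suc k)
  have "(c ^ k * Y j) * c \<le> Y (j + k) * (1 - rr p (j + k))"
    using Suc rr_le[of "j + k"] c_pos Y_pos[of j] Y_pos[of "j + k"] by (intro mult_mono) auto
  then show ?case by (simp add: Y_Suc_eq_mult algebra_simps)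
qed simp

lemma exp_theta_incr_le:
  assumes "m < j"
  shows "exp (theta_incr d m j) \<le> y m / (c ^ Suc d * Y j)"
proof -
  have "theta_incr d m j \<le> (\<Sum>i\<in>{Suc m..<Suc j}. rr p (i + d))"
  proof -
    have "{m<..j} = {Suc m..<Suc j}" by auto
    then show ?thesis unfolding theta_incr_def by (metis ss_le_rr sum_mono)
  qed
  also have "\<dots> = (\<Sum>l\<in>{Suc m + d..<Suc j + d}. rr p l)"
    by (rule sum.shift_bounds_nat_ivl[symmetric])
  finally have "exp (theta_incr d m j) \<le> exp (\<Sum>l\<in>{Suc m + d..<Suc j + d}. rr p l)" by simp
  also have "\<dots> \<le> Y (Suc m + d) / Y (Suc j + d)"
  proof -
    have "Y (Suc j + d) \<le> Y (Suc m + d) * exp (- (\<Sum>l\<in>{Suc m + d..<Suc j + d}. rr p l))"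
      by (rule Y_le_exp_sum_rr) (use assms in simp)
    then show ?thesis using Y_pos[of "Suc j + d"] by (simp add: exp_minus field_simps)
  qed
  also have "\<dots> \<le> y m / (c ^ Suc d * Y j)"
    using Y_antimono[of "Suc m" "Suc m + d"] pow_mult_Y_le_Y_add[of "Suc d" j]
      y_pos[of m] c_pos Y_pos[of j]
    by (intro frac_le) (auto simp: Y_Suc add.commute)
  finally show ?thesis .
qed

lemma abs_xi_at_cube_le_sqrt:
  assumes "m < j"
  shows "\<bar>xi_at d m j\<bar> ^ 3 \<le> 216 / sqrt (c ^ Suc d) * sqrt (y m) / sqrt (Y j)"
proof -
  have "exp (theta_incr d m j / 2) \<le> sqrt (y m / (c ^ Suc d * Y j))"
  proof (rule real_le_rsqrt)
    show "exp (theta_incr d m j / 2) ^ 2 \<le> y m / (c ^ Suc d * Y j)"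
      using exp_theta_incr_le[OF assms] by (simp flip: exp_of_nat_mult)
  qed
  also have "\<dots> = sqrt (y m) / (sqrt (c ^ Suc d) * sqrt (Y j))"
    by (simp add: real_sqrt_divide real_sqrt_mult)
  finally have "216 * exp (theta_incr d m j / 2) \<le> 216 * (sqrt (y m) / (sqrt (c ^ Suc d) * sqrt (Y j)))"
    by simp
  then show ?thesis
    using abs_xi_at_cube_le[OF assms, of d] one_plus_cube_le_exp[OF theta_incr_nonneg, of d m j]
    by simp
qed

text \<open>Under \<open>r\<^sub>l \<le> 1 - c\<close> the bound \<open>\<bar>\<xi>\<bar>\<^sup>3 \<lesssim> \<surd>(y\<^sub>m / Y\<^sub>j)\<close> is summed against \<open>p\<^sub>j\<close> by telescoping \<open>\<surd>Y\<^sub>j\<close>.\<close>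
lemma cube_moment_le_of_rr_le:
  shows "cube_moment d m \<le> ennreal (432 / sqrt (c ^ Suc d) * y m)"
proof -
  define K where "K = 216 / sqrt (c ^ Suc d)"
  have K: "K \<ge> 0" unfolding K_def using c_pos by simp
  define t where "t j = 2 * K * sqrt (y m) * sqrt (Y (max j (Suc m)))" for j
  have "cube_moment d m \<le> ennreal (t 0)"
    unfolding cube_moment_def
  proof (rule suminf_ennreal_le_telescoping[OF cube_moment_summand_nonneg])
    fix j
    show "0 \<le> t j"
      unfolding t_def using K y_pos[of m] Y_pos[of "max j (Suc m)"]
      by (intro mult_nonneg_nonneg) auto
    show "p j * \<bar>xi_at d m j\<bar> ^ 3 \<le> t j - t (Suc j)"
    proof (cases "j \<le> m")
      case True
      then show ?thesis by (simp add: xi_at_eq_0 t_def max_def)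
    next
      case False
      have "p j * \<bar>xi_at d m j\<bar> ^ 3 \<le> p j * (K * sqrt (y m) / sqrt (Y j))"
        using abs_xi_at_cube_le_sqrt[of m j d] False p_pos[of j]
        by (intro mult_left_mono) (auto simp: K_def)
      also have "\<dots> = K * sqrt (y m) * (p j / sqrt (Y j))" by simp
      also have "\<dots> \<le> K * sqrt (y m) * (2 * (sqrt (Y j) - sqrt (Y (Suc j))))"
        using p_div_sqrt_Y_le K y_pos[of m] by (intro mult_left_mono) auto
      also have "\<dots> = t j - t (Suc j)"
        unfolding t_def using False by (cases "j = Suc m") (auto simp: max_def algebra_simps)
      finally show ?thesis .
    qed
  qed
  also have "t 0 = 432 / sqrt (c ^ Suc d) * y m"
    unfolding t_def K_def using y_pos[of m] by (simp add: Y_Suc)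
  finally show ?thesis .
qed

lemma occupation_cube_moment_le_ln:
  shows "\<exists>A B. 0 \<le> A \<and> 0 \<le> B \<and> (\<forall>n\<ge>1.
    (\<Sum>m. ennreal (occupation n m) * cube_moment d m) \<le> ennreal (A + B * ln (real n)))"
proof (intro exI conjI allI impI)
  define C where "C = 432 / sqrt (c ^ Suc d)"
  show C: "0 \<le> 3 * C" "0 \<le> C" unfolding C_def using c_pos by auto
  fix n :: nat
  assume n: "n \<ge> 1"
  have "(\<Sum>m. ennreal (occupation n m) * cube_moment d m)
      \<le> ennreal ((\<Sum>m\<le>mm p (real n). C * ((if m = 0 then 1 else 0) + rr p m)) + C)"
    using cube_moment_le_of_rr_le[of d] C
    by (intro occupation_weighted_sum_le[OF n]) (auto simp: C_def)
  also have "(\<Sum>m\<le>mm p (real n). C * ((if m = 0 then 1 else 0) + rr p m))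
      = C * (1 + (\<Sum>m\<le>mm p (real n). rr p m))"
    by (simp add: sum_distrib_left[symmetric] sum.distrib)
  also have "C * (1 + (\<Sum>m\<le>mm p (real n). rr p m)) + C \<le> 3 * C + C * ln (real n)"
    using mult_left_mono[OF sum_rr_le_ln[OF n] C(2)] by (simp add: algebra_simps)
  finally show "(\<Sum>m. ennreal (occupation n m) * cube_moment d m) \<le> ennreal (3 * C + C * ln (real n))"
    by (simp add: ennreal_leI)
qed

end

section \<open>The case \<open>r = 1\<close>\<close>

lemma sum_ee_window_le: "(\<Sum>m\<le>K. ee_window d m) \<le> real d * ((\<Sum>k=1..K. ee p d k) + real d)"
proof -
  have "(\<Sum>m\<le>K. ee_window d m) = (\<Sum>t=1..d. \<Sum>m\<le>K. ee p d (t + m))"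
  proof -
    have "ee_window d m = (\<Sum>t=1..d. ee p d (t + m))" for m
    proof -
      have "{m<..m + d} = {1 + m..d + m}" by auto
      then show ?thesis unfolding ee_window_def by (simp only:) (rule sum.shift_bounds_cl_nat_ivl)
    qed
    then have "(\<Sum>m\<le>K. ee_window d m) = (\<Sum>m\<le>K. \<Sum>t=1..d. ee p d (t + m))" by simp
    then show ?thesis by (simp only: sum.swap[of _ "{..K}"])
  qed
  also have "\<dots> \<le> (\<Sum>t=1..d. (\<Sum>k=1..K. ee p d k) + real d)"
  proof (rule sum_mono)
    fix t
    assume t: "t \<in> {1..d}"
    have "(\<Sum>m\<le>K. ee p d (t + m)) = (\<Sum>m=0..K. ee p d (m + t))"
      by (simp add: atMost_atLeast0 add.commute)
    also have "\<dots> = (\<Sum>k=0 + t..K + t. ee p d k)"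
      by (rule sum.shift_bounds_cl_nat_ivl[symmetric])
    also have "\<dots> \<le> (\<Sum>k=1..K + d. ee p d k)"
      by (rule sum_mono2) (use t ee_nonneg in auto)
    also have "\<dots> = (\<Sum>k=1..K. ee p d k) + (\<Sum>k\<in>{K<..K + d}. ee p d k)"
    proof -
      have "{1..K + d} = {1..K} \<union> {K<..K + d}" by auto
      then show ?thesis by (simp add: sum.union_disjoint ivl_disj_int)
    qed
    also have "(\<Sum>k\<in>{K<..K + d}. ee p d k) \<le> real d"
      using sum_bounded_above[of "{K<..K + d}" "ee p d" 1] ee_le_1 by simp
    finally show "(\<Sum>m\<le>K. ee p d (t + m)) \<le> (\<Sum>k=1..K. ee p d k) + real d" by simp
  qed
  finally show ?thesis by simp
qed

lemma suminf_le_p_then_geometric: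
  fixes f :: "nat \<Rightarrow> real"
  assumes f0: "\<And>j. 0 \<le> f j" and f_zero: "\<And>j. j \<le> m \<Longrightarrow> f j = 0"
    and f_le_p: "\<And>j. m < j \<Longrightarrow> j \<le> b \<Longrightarrow> f j \<le> A * p j"
    and f_le_geom: "\<And>j. b < j \<Longrightarrow> f j \<le> G * (1/2) ^ (j - b - 1)"
    and "A \<ge> 0" "G \<ge> 0" "m \<le> b"
  shows "(\<Sum>j. ennreal (f j)) \<le> ennreal (A * y m + 2 * G)"
proof -
  define t where
    "t j = A * Y (min (max j (Suc m)) (Suc b)) + 2 * G * (1/2) ^ (max j (Suc b) - Suc b)" for j
  have "(\<Sum>j. ennreal (f j)) \<le> ennreal (t 0)"
  proof (rule suminf_ennreal_le_telescoping[OF f0])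
    fix j
    show "0 \<le> t j"
      unfolding t_def using assms Y_pos[of "min (max j (Suc m)) (Suc b)"]
      by (intro add_nonneg_nonneg mult_nonneg_nonneg) auto
    consider "j \<le> m" | "m < j" "j \<le> b" | "b < j" by linarith
    then show "f j \<le> t j - t (Suc j)"
    proof cases
      case 1
      then show ?thesis using f_zero[of j] \<open>m \<le> b\<close> by (simp add: t_def max_def min_def)
    next
      case 2
      then have "t j - t (Suc j) = A * (Y j - Y (Suc j))"
        unfolding t_def by (cases "j = Suc m") (auto simp: max_def min_def algebra_simps)
      then show ?thesis using f_le_p[of j] 2 by (simp add: Y_Suc_eq_diff)
    next
      case 3
      then have "t j - t (Suc j) = 2 * G * ((1/2) ^ (j - Suc b) - (1/2) ^ (Suc j - Suc b))"
        unfolding t_def using \<open>m \<le> b\<close>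
        by (cases "j = Suc b") (auto simp: max_def min_def algebra_simps)
      also have "Suc j - Suc b = Suc (j - Suc b)" using 3 by simp
      finally show ?thesis using f_le_geom[of j] 3 by (simp add: algebra_simps)
    qed
  qed
  also have "t 0 = A * y m + 2 * G"
    unfolding t_def using \<open>m \<le> b\<close> by (simp add: Y_Suc)
  finally show ?thesis .
qed

lemma Y_eventually_decays:
  assumes "(\<lambda>k. rr p k) \<longlonglongrightarrow> 1"
  obtains m0 where "\<And>l. l \<ge> m0 \<Longrightarrow> 16 * Y (Suc l) \<le> Y l"
proof -
  have "eventually (\<lambda>l. rr p l > 15 / 16) sequentially"
    using assms by (intro order_tendstoD) auto
  then obtain m0 where "\<And>l. l \<ge> m0 \<Longrightarrow> rr p l > 15 / 16"
    by (auto simp: eventually_sequentially)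
  then have "16 * Y (Suc l) \<le> Y l" if "l \<ge> m0" for l
    using Y_Suc_eq_mult[of l] Y_pos[of l] mult_left_mono[of "1 - rr p l" "1 / 16" "Y l"] that
    by fastforce
  then show ?thesis by (rule that)
qed

context
  fixes m0 :: nat
  assumes Y_decay: "\<And>l. l \<ge> m0 \<Longrightarrow> 16 * Y (Suc l) \<le> Y l"
begin

lemma Y_le_geometric: "a \<ge> m0 \<Longrightarrow> Y (Suc a + k) \<le> Y (Suc a) * (1/16) ^ k"
proof (induction k)
  case (Suc k)
  then show ?case using Y_decay[of "Suc a + k"] by simp
qed simp

text \<open>Past \<open>m\<^sub>0\<close> the probabilities \<open>p\<^sub>j\<close> decay like \<open>16\<^sup>-\<^sup>j\<close>, which beats the cubic growth of \<open>\<bar>\<xi>\<bar>\<close>.\<close>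
lemma p_mult_cube_le_geometric:
  assumes "a \<ge> m0" "L \<ge> 0" "a < j"
  shows "p j * (L + real (j - a)) ^ 3 \<le> (L + 1) ^ 3 * y a * (1/2) ^ (j - a - 1)"
proof -
  define t where "t = j - a - 1"
  have jt: "j = Suc a + t" using assms unfolding t_def by simp
  have pj: "p j \<le> y a * (1/16) ^ t"
    using p_le_Y[of j] Y_le_geometric[OF assms(1), of t] jt by (simp add: Y_Suc)
  have "L + real (j - a) \<le> (L + 1) * (1 + real t)"
    using jt assms by (simp add: algebra_simps)
  then have "(L + real (j - a)) ^ 3 \<le> ((L + 1) * (1 + real t)) ^ 3"
    by (rule power_mono) (use assms in simp)
  also have "\<dots> \<le> (L + 1) ^ 3 * 8 ^ t"
    unfolding power_mult_distrib by (rule mult_left_mono[OF one_plus_cube_le_pow_8]) (use assms in simp)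
  finally have "p j * (L + real (j - a)) ^ 3 \<le> (y a * (1/16) ^ t) * ((L + 1) ^ 3 * 8 ^ t)"
    by (rule mult_mono[OF pj]) (use p_pos[of j] y_pos[of a] assms in auto)
  also have "\<dots> = (L + 1) ^ 3 * y a * (1/2) ^ t"
    by (simp flip: power_mult_distrib)
  finally show ?thesis unfolding t_def .
qed

text \<open>Inside the window \<open>m < j \<le> m + \<delta>\<close> one has \<open>\<bar>\<xi>\<bar> \<le> e\<^sub>m\<^sub>+\<^sub>1 + \<dots> + e\<^sub>m\<^sub>+\<^sub>\<delta>\<close>; beyond it the
  geometric tail starts from \<open>y\<^sub>m\<^sub>+\<^sub>\<delta> = y\<^sub>m e\<^sub>m\<^sub>+\<^sub>1\<close>.\<close>
lemma cube_moment_le_ee_window: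
  assumes "d > 0" "m \<ge> m0"
  shows "cube_moment d m \<le> ennreal ((real d ^ 2 + 2 * (2 + real d) ^ 3) * y m * ee_window d m)"
proof -
  have "cube_moment d m
      \<le> ennreal ((real d ^ 2 * ee_window d m) * y m + 2 * ((2 + real d) ^ 3 * y (m + d)))"
    unfolding cube_moment_def
  proof (rule suminf_le_p_then_geometric[where b = "m + d"])
    fix j
    assume "m < j" "j \<le> m + d"
    then have "\<bar>xi_at d m j\<bar> ^ 3 = theta_incr d m j ^ 2 * theta_incr d m j"
      using theta_incr_nonneg[of d m j] by (simp add: xi_at_eq power3_eq_cube power2_eq_square)
    also have "\<dots> \<le> real d ^ 2 * ee_window d m"
      using theta_incr_nonneg[of d m j] theta_incr_le[of d m j] theta_incr_le_ee_window[of j m d] \<open>j \<le> m + d\<close>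
      by (intro mult_mono power_mono) auto
    finally show "p j * \<bar>xi_at d m j\<bar> ^ 3 \<le> real d ^ 2 * ee_window d m * p j"
      using p_pos[of j] by (simp add: mult.commute mult_left_mono)
  next
    fix j
    assume j: "m + d < j"
    have "real (j - m) = real d + real (j - (m + d))" using j by simp
    then have "\<bar>xi_at d m j\<bar> ^ 3 \<le> (1 + real d + real (j - (m + d))) ^ 3"
      using abs_xi_at_cube_le_card[of m j d] j by (simp add: add.assoc)
    then have "p j * \<bar>xi_at d m j\<bar> ^ 3 \<le> p j * (1 + real d + real (j - (m + d))) ^ 3"
      using p_pos[of j] by (simp add: mult_left_mono)
    also have "\<dots> \<le> (2 + real d) ^ 3 * y (m + d) * (1/2) ^ (j - (m + d) - 1)"
      using p_mult_cube_le_geometric[of "m + d" "1 + real d" j] assms j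
      by (simp add: add.commute add.left_commute)
    finally show "p j * \<bar>xi_at d m j\<bar> ^ 3 \<le> (2 + real d) ^ 3 * y (m + d) * (1/2) ^ (j - (m + d) - 1)" .
  qed (use ee_window_nonneg[of d m] y_pos[of "m + d"] in \<open>auto simp: xi_at_eq_0 cube_moment_summand_nonneg\<close>)
  also have "y (m + d) = y m * ee p d (Suc m)"
    using y_pos[of m] by (simp add: ee_eq Y_Suc)
  also have "real d ^ 2 * ee_window d m * y m + 2 * ((2 + real d) ^ 3 * (y m * ee p d (Suc m)))
      \<le> (real d ^ 2 + 2 * (2 + real d) ^ 3) * y m * ee_window d m"
    using ee_Suc_le_ee_window[OF assms(1), of m] y_pos[of m]
      mult_left_mono[of "y m * ee p d (Suc m)" "y m * ee_window d m" "(2 + real d) ^ 3"]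
    by (simp add: algebra_simps)
  finally show ?thesis by (simp add: ennreal_leI)
qed

lemma cube_moment_le_below:
  assumes "m < m0"
  shows "cube_moment d m \<le> ennreal (((1 + real m0) ^ 3 + 2 * (2 + real m0) ^ 3) * y m)"
proof -
  have "cube_moment d m \<le> ennreal ((1 + real m0) ^ 3 * y m + 2 * ((2 + real m0) ^ 3 * y m0))"
    unfolding cube_moment_def
  proof (rule suminf_le_p_then_geometric[where b = m0])
    fix j
    assume "m < j" "j \<le> m0"
    then have "\<bar>xi_at d m j\<bar> ^ 3 \<le> (1 + real m0) ^ 3"
      using abs_xi_at_cube_le_card[of m j d] power_mono[of "1 + real (j - m)" "1 + real m0" 3]
      by linarith
    then show "p j * \<bar>xi_at d m j\<bar> ^ 3 \<le> (1 + real m0) ^ 3 * p j"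
      using p_pos[of j] by (simp add: mult.commute mult_left_mono)
  next
    fix j
    assume j: "m0 < j"
    have "p j * \<bar>xi_at d m j\<bar> ^ 3 \<le> p j * ((1 + real (m0 - m)) + real (j - m0)) ^ 3"
      using abs_xi_at_cube_le_card[of m j d] p_pos[of j] j assms
      by (simp add: mult_left_mono of_nat_diff)
    also have "\<dots> \<le> ((1 + real (m0 - m)) + 1) ^ 3 * y m0 * (1/2) ^ (j - m0 - 1)"
      by (rule p_mult_cube_le_geometric) (use j in auto)
    also have "\<dots> \<le> (2 + real m0) ^ 3 * y m0 * (1/2) ^ (j - m0 - 1)"
      by (intro mult_right_mono power_mono) (use y_pos[of m0] in auto)
    finally show "p j * \<bar>xi_at d m j\<bar> ^ 3 \<le> (2 + real m0) ^ 3 * y m0 * (1/2) ^ (j - m0 - 1)" .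
  qed (use y_pos[of m0] assms in \<open>auto simp: xi_at_eq_0 cube_moment_summand_nonneg less_imp_le\<close>)
  also have "\<dots> \<le> ennreal (((1 + real m0) ^ 3 + 2 * (2 + real m0) ^ 3) * y m)"
    using y_antimono[of m m0] assms by (intro ennreal_leI) (auto simp: algebra_simps intro!: mult_left_mono)
  finally show ?thesis .
qed

lemma cube_moment_le_y:
  assumes "d > 0"
  shows "cube_moment d m \<le> ennreal (((real d ^ 2 + 2 * (2 + real d) ^ 3) * real d
             + ((1 + real m0) ^ 3 + 2 * (2 + real m0) ^ 3)) * y m)"
    (is "_ \<le> ennreal ((?C1 * real d + ?C0) * y m)")
proof (cases "m < m0")
  case True
  have "cube_moment d m \<le> ennreal (?C0 * y m)"
    by (rule cube_moment_le_below[OF True])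
  also have "?C0 * y m \<le> (?C1 * real d + ?C0) * y m"
    using y_pos[of m] by (intro mult_right_mono) auto
  finally show ?thesis by (simp add: ennreal_leI)
next
  case False
  have "cube_moment d m \<le> ennreal (?C1 * y m * ee_window d m)"
    using cube_moment_le_ee_window[OF assms, of m] False by simp
  also have "?C1 * y m * ee_window d m \<le> ?C1 * y m * real d"
    using ee_window_le[of d m] y_pos[of m] by (intro mult_left_mono) auto
  also have "\<dots> \<le> (?C1 * real d + ?C0) * y m"
    using y_pos[of m] by (simp add: algebra_simps)
  finally show ?thesis by (simp add: ennreal_leI)
qed

lemma occupation_cube_moment_le_ee_sum:
  assumes d: "d > 0"
  shows "\<exists>A B. 0 \<le> A \<and> 0 \<le> B \<and> (\<forall>n\<ge>1.
    (\<Sum>m. ennreal (occupation n m) * cube_moment d m)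
      \<le> ennreal (A + B * (\<Sum>k=1..mm p (real n). ee p d k)))"
proof (intro exI conjI allI impI)
  define C1 where "C1 = real d ^ 2 + 2 * (2 + real d) ^ 3"
  define C2 where "C2 = C1 * real d + ((1 + real m0) ^ 3 + 2 * (2 + real m0) ^ 3)"
  have C1: "C1 \<ge> 0" and C2: "C2 \<ge> 0" unfolding C1_def C2_def by simp_all
  define c where "c m = (if m < m0 then C2 else C1 * ee_window d m)" for m
  show "0 \<le> 2 * C2 * real m0 + 2 * C1 * real d * real d + C2" "0 \<le> 2 * C1 * real d"
    using C1 C2 by simp_all
  fix n :: nat
  assume n: "n \<ge> 1"
  define mn where "mn = mm p (real n)"
  have c_nonneg: "c m \<ge> 0" for m
    unfolding c_def using C1 C2 ee_window_nonneg[of d m] by simp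
  have "cube_moment d m \<le> ennreal (c m * y m)" for m
    using cube_moment_le_y[OF d, of m]
      cube_moment_le_ee_window[OF d, of m]
    unfolding c_def C2_def C1_def by (auto simp: ac_simps)
  then have "(\<Sum>m. ennreal (occupation n m) * cube_moment d m)
      \<le> ennreal ((\<Sum>m\<le>mn. c m * ((if m = 0 then 1 else 0) + rr p m)) + C2)"
    unfolding mn_def using cube_moment_le_y[OF d] c_nonneg C2
    by (intro occupation_weighted_sum_le[OF n]) (auto simp: C1_def C2_def)
  also have "(\<Sum>m\<le>mn. c m * ((if m = 0 then 1 else 0) + rr p m)) \<le> (\<Sum>m\<le>mn. 2 * c m)"
  proof (rule sum_mono)
    fix m
    have "(if m = 0 then 1 else 0) + rr p m \<le> 2"
      using rr_less_1[of m] by (cases "m = 0") auto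
    from mult_left_mono[OF this c_nonneg[of m]]
    show "c m * ((if m = 0 then 1 else 0) + rr p m) \<le> 2 * c m" by (simp add: mult.commute)
  qed
  also have "(\<Sum>m\<le>mn. 2 * c m) = 2 * (\<Sum>m\<le>mn. c m)"
    by (simp add: sum_distrib_left)
  also have "(\<Sum>m\<le>mn. c m) \<le> C2 * real m0 + (\<Sum>m\<le>mn. C1 * ee_window d m)"
    unfolding c_def using C1 C2 ee_window_nonneg by (intro sum_if_less_le) auto
  also have "\<dots> \<le> C2 * real m0 + C1 * (real d * ((\<Sum>k=1..mn. ee p d k) + real d))"
    using sum_ee_window_le[of d mn] C1 by (simp add: mult_left_mono flip: sum_distrib_left)
  finally show "(\<Sum>m. ennreal (occupation n m) * cube_moment d m)
      \<le> ennreal (2 * C2 * real m0 + 2 * C1 * real d * real d + C2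
        + 2 * C1 * real d * (\<Sum>k=1..mm p (real n). ee p d k))"
    unfolding mn_def by (simp add: ennreal_leI algebra_simps)
qed

end

lemma mm_at_top: "filterlim (\<lambda>n. mm p (real n)) at_top sequentially"
  unfolding filterlim_at_top
proof
  fix J :: nat
  have "J \<le> mm p (real n)" if n: "n \<ge> nat \<lceil>1 / y J\<rceil> + 1" for n
  proof (rule ccontr)
    assume "\<not> J \<le> mm p (real n)"
    then have "y J \<le> y (mm p (real n))" by (intro y_antimono) simp
    moreover have "y (mm p (real n)) < 1 / real n" using n by (intro y_mm_less) simp
    moreover have "1 / y J < real n" using n real_nat_ceiling_ge[of "1 / y J"] by linarith
    then have "1 / real n < y J" using y_pos[of J] n by (simp add: field_simps)
    ultimately show False by simp
  qed
  then show "eventually (\<lambda>n. J \<le> mm p (real n)) sequentially"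
    unfolding eventually_sequentially by blast
qed

lemma sum_ee_at_top:
  assumes "\<not> summable (\<lambda>k. ee p d (Suc k))"
  shows "filterlim (\<lambda>K. \<Sum>k=1..K. ee p d k) at_top sequentially"
proof -
  define S where "S K = (\<Sum>k=1..K. ee p d k)" for K
  have "eventually (\<lambda>K. Z \<le> S K) sequentially" for Z
  proof -
    have "\<exists>K. Z \<le> S K"
    proof (rule ccontr)
      assume "\<nexists>K. Z \<le> S K"
      then have "summable (\<lambda>k. ee p d (Suc k))"
        by (intro summableI_nonneg_bounded[of _ Z])
          (auto simp: ee_nonneg S_def sum.atLeast1_atMost_eq not_le less_imp_le)
      with assms show False ..
    qed
    then obtain K where "Z \<le> S K" ..
    moreover have "S K \<le> S K'" if "K \<le> K'" for K'
      unfolding S_def using that ee_nonneg by (intro sum_mono2) auto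
    ultimately show ?thesis
      unfolding eventually_sequentially by (meson order_trans)
  qed
  then show ?thesis unfolding filterlim_at_top S_def by blast
qed

end

section \<open>Probabilistic setting\<close>

lemma measurable_comp_nat_pair:
  assumes "f \<in> measurable M (count_space UNIV)" and "g \<in> measurable M (count_space UNIV)"
    and "\<And>a b. h a b \<in> space N"
  shows "(\<lambda>\<omega>. h (f \<omega> :: nat) (g \<omega> :: nat)) \<in> measurable M N"
proof -
  have "(\<lambda>\<omega>. (\<lambda>a \<omega>. h a (g \<omega>)) (f \<omega>) \<omega>) \<in> measurable M N"
    by (rule measurable_compose_countable[OF _ assms(1)])
      (rule measurable_compose[OF assms(2)], simp add: assms(3))
  then show ?thesis by simp
qed

lemma sets_pred_nat_pair:
  assumes "f \<in> measurable M (count_space UNIV)" and "g \<in> measurable M (count_space UNIV)"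
  shows "{\<omega> \<in> space M. P (f \<omega> :: nat) (g \<omega> :: nat)} \<in> sets M"
proof -
  have "(\<lambda>\<omega>. P (f \<omega>) (g \<omega>)) -` {True} \<inter> space M \<in> sets M"
    by (rule measurable_sets[OF measurable_comp_nat_pair[OF assms, where N = "count_space UNIV"]])
      simp_all
  moreover have "(\<lambda>\<omega>. P (f \<omega>) (g \<omega>)) -` {True} \<inter> space M = {\<omega> \<in> space M. P (f \<omega>) (g \<omega>)}"
    by auto
  ultimately show ?thesis by simp
qed

lemma nn_integral_comp_nat_pair:
  assumes f: "f \<in> measurable M (count_space UNIV)" and g: "g \<in> measurable M (count_space UNIV)"
  shows "(\<integral>\<^sup>+\<omega>. h (f \<omega>) (g \<omega>) \<partial>M)
    = (\<Sum>m. \<Sum>j. h m j * emeasure M {\<omega> \<in> space M. f \<omega> = (m::nat) \<and> g \<omega> = (j::nat)})"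
proof -
  define E where "E m j = {\<omega> \<in> space M. f \<omega> = m \<and> g \<omega> = j}" for m j
  have E: "E m j \<in> sets M" for m j
    unfolding E_def by (rule sets_pred_nat_pair[OF f g])
  have "h (f \<omega>) (g \<omega>) = (\<Sum>m. \<Sum>j. h m j * indicator (E m j) \<omega>)" if "\<omega> \<in> space M" for \<omega>
  proof -
    have "(\<Sum>j. h m j * indicator (E m j) \<omega>) = (if f \<omega> = m then h m (g \<omega>) else 0)" for m
      using suminf_finite[of "{g \<omega>}" "\<lambda>j. h m j * indicator (E m j) \<omega>"] that
      by (auto simp: E_def indicator_def)
    then show ?thesis
      using suminf_finite[of "{f \<omega>}" "\<lambda>m. if f \<omega> = m then h m (g \<omega>) else 0"] by simp
  qed
  then have "(\<integral>\<^sup>+\<omega>. h (f \<omega>) (g \<omega>) \<partial>M) = (\<integral>\<^sup>+\<omega>. (\<Sum>m. \<Sum>j. h m j * indicator (E m j) \<omega>) \<partial>M)"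
    by (intro nn_integral_cong) simp
  also have "\<dots> = (\<Sum>m. \<Sum>j. \<integral>\<^sup>+\<omega>. h m j * indicator (E m j) \<omega> \<partial>M)"
    using E by (simp add: nn_integral_suminf)
  also have "\<dots> = (\<Sum>m. \<Sum>j. h m j * emeasure M (E m j))"
    using E by (simp add: nn_integral_cmult_indicator)
  finally show ?thesis unfolding E_def .
qed

lemma (in prob_space) prob_eq_sums_1:
  assumes "f \<in> measurable M (count_space UNIV)"
  shows "(\<lambda>k. prob {\<omega> \<in> space M. f \<omega> = (k::nat)}) sums 1"
proof -
  define A where "A k = {\<omega> \<in> space M. f \<omega> = k}" for k
  have "(\<lambda>k. prob (A k)) sums prob (\<Union>k. A k)"
  proof (rule finite_measure_UNION)
    show "range A \<subseteq> events"
      unfolding A_def using sets_pred_nat_pair[OF assms assms, of "\<lambda>a _. a = _"] by auto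
    show "disjoint_family A" unfolding A_def disjoint_family_on_def by auto
  qed
  moreover have "(\<Union>k. A k) = space M" unfolding A_def by auto
  ultimately show ?thesis unfolding A_def by (simp add: prob_space)
qed

lemma maxX_0: "maxX X 0 \<omega> = 0"
  unfolding maxX_def by simp

lemma maxX_Suc: "maxX X (Suc k) \<omega> = max (maxX X k \<omega>) (X (Suc k) \<omega>)"
proof -
  have "insert 0 ((\<lambda>i. X i \<omega>) ` {1..Suc k}) = insert (X (Suc k) \<omega>) (insert 0 ((\<lambda>i. X i \<omega>) ` {1..k}))"
    by (auto simp: atLeastAtMostSuc_conv)
  then show ?thesis unfolding maxX_def by (simp add: max.commute)
qed

lemma maxX_le_iff: "maxX X k \<omega> \<le> m \<longleftrightarrow> (\<forall>i\<in>{1..k}. X i \<omega> \<le> m)"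
  unfolding maxX_def by (subst Max_le_iff) auto

lemma maxX_measurable:
  assumes "\<And>i. X i \<in> measurable M (count_space UNIV)"
  shows "maxX X k \<in> measurable M (count_space UNIV)"
proof (induction k)
  case (Suc k)
  have "(\<lambda>\<omega>. max (maxX X k \<omega>) (X (Suc k) \<omega>)) \<in> measurable M (count_space UNIV)"
    by (rule measurable_comp_nat_pair[OF Suc.IH assms]) simp
  then show ?case by (simp add: maxX_Suc[abs_def])
qed (simp add: maxX_0 measurable_count_space_const)

locale iid_maxima = prob_space M + positive_law p
  for M :: "'a measure" and p :: "nat \<Rightarrow> real" +
  fixes X :: "nat \<Rightarrow> 'a \<Rightarrow> nat"
  assumes X_measurable: "\<And>i. X i \<in> measurable M (count_space UNIV)"
    and X_indep: "indep_vars (\<lambda>_. count_space UNIV) X {1..}"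
    and X_ident: "\<And>i. i \<ge> 1 \<Longrightarrow> distr M (count_space UNIV) (X i) = distr M (count_space UNIV) (X 1)"
    and p_eq: "\<And>k. p k = prob {\<omega> \<in> space M. X 1 \<omega> = k}"
begin

lemma prob_X_eq_prob_X_1:
  assumes "i \<ge> 1"
  shows "prob {\<omega> \<in> space M. X i \<omega> \<in> A} = prob {\<omega> \<in> space M. X 1 \<omega> \<in> A}"
proof -
  have "prob {\<omega> \<in> space M. X j \<omega> \<in> A} = measure (distr M (count_space UNIV) (X j)) A" for j
    using measure_distr[OF X_measurable[of j], of A] by (simp add: vimage_def Int_def conj_commute)
  then show ?thesis using X_ident[OF assms] by simp
qed

lemma prob_X_1_le: "prob {\<omega> \<in> space M. X 1 \<omega> \<le> m} = 1 - y m"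
proof -
  define E where "E i = {\<omega> \<in> space M. X 1 \<omega> = i}" for i
  have "{\<omega> \<in> space M. X 1 \<omega> \<le> m} = (\<Union>i<Suc m. E i)" unfolding E_def by auto
  moreover have "E i \<in> events" for i
    using sets_pred_nat_pair[OF X_measurable X_measurable, of "\<lambda>a _. a = i" 1] by (simp add: E_def)
  then have "prob (\<Union>i<Suc m. E i) = (\<Sum>i<Suc m. prob (E i))"
    by (intro measure_finite_Union) (auto simp: E_def disjoint_family_on_def)
  ultimately show ?thesis unfolding y_eq_1_minus_sum by (simp add: p_eq E_def)
qed

lemma prob_maxX_le_X_eq: "prob {\<omega> \<in> space M. maxX X k \<omega> \<le> m \<and> X (Suc k) \<omega> = j} = (1 - y m) ^ k * p j"
proof -
  define A where "A i = (if i = Suc k then X i -` {j} \<inter> space M else X i -` {..m} \<inter> space M)" for i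
  have "indep_sets (\<lambda>i. {X i -` A \<inter> space M | A. A \<in> sets (count_space UNIV)}) {1..}"
    using X_indep unfolding indep_vars_def2 by simp
  then have "prob (\<Inter>i\<in>{1..Suc k}. A i) = (\<Prod>i\<in>{1..Suc k}. prob (A i))"
    by (rule indep_setsD) (auto simp: A_def)
  moreover have "(\<Inter>i\<in>{1..Suc k}. A i) = {\<omega> \<in> space M. maxX X k \<omega> \<le> m \<and> X (Suc k) \<omega> = j}"
  proof -
    have "{1..Suc k} = insert (Suc k) {1..k}" by auto
    moreover have "(\<Inter>i\<in>{1..k}. A i) = (\<Inter>i\<in>{1..k}. X i -` {..m} \<inter> space M)"
      by (rule INF_cong[OF refl]) (auto simp: A_def)
    ultimately have "(\<Inter>i\<in>{1..Suc k}. A i) = (X (Suc k) -` {j} \<inter> space M) \<inter> (\<Inter>i\<in>{1..k}. X i -` {..m} \<inter> space M)"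
      by (simp only: INT_insert) (simp add: A_def)
    then show ?thesis unfolding maxX_le_iff by blast
  qed
  moreover have "prob (A i) = 1 - y m" if "i \<in> {1..k}" for i
  proof -
    have "A i = {\<omega> \<in> space M. X i \<omega> \<in> {..m}}" using that unfolding A_def by auto
    then show ?thesis using prob_X_eq_prob_X_1[of i "{..m}"] prob_X_1_le[of m] that by simp
  qed
  moreover have "prob (A (Suc k)) = p j"
  proof -
    have "A (Suc k) = {\<omega> \<in> space M. X (Suc k) \<omega> \<in> {j}}" unfolding A_def by auto
    then show ?thesis using prob_X_eq_prob_X_1[of "Suc k" "{j}"] by (simp add: p_eq)
  qed
  ultimately show ?thesis by (simp add: atLeastAtMostSuc_conv mult.commute)
qed

lemma prob_maxX_eq_X_eq: "prob {\<omega> \<in> space M. maxX X k \<omega> = m \<and> X (Suc k) \<omega> = j} = max_pmf k m * p j"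
proof (cases "k = 0 \<or> m = 0")
  case True
  then have "{\<omega> \<in> space M. maxX X k \<omega> = m \<and> X (Suc k) \<omega> = j}
      = (if k = 0 \<and> m \<noteq> 0 then {} else {\<omega> \<in> space M. maxX X k \<omega> \<le> 0 \<and> X (Suc k) \<omega> = j})"
    by (auto simp: maxX_0)
  then show ?thesis using True prob_maxX_le_X_eq[of k 0 j] by (auto simp: max_pmf_def Y_0)
next
  case False
  then obtain m' where m: "m = Suc m'" by (metis not0_implies_Suc)
  define B where "B a = {\<omega> \<in> space M. maxX X k \<omega> \<le> a \<and> X (Suc k) \<omega> = j}" for a
  have "B a \<in> events" for a
    unfolding B_def by (rule sets_pred_nat_pair[OF maxX_measurable[OF X_measurable] X_measurable])
  moreover have "{\<omega> \<in> space M. maxX X k \<omega> = m \<and> X (Suc k) \<omega> = j} = B m - B m'"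
    "B m' \<subseteq> B m"
    unfolding B_def m by auto
  ultimately have "prob {\<omega> \<in> space M. maxX X k \<omega> = m \<and> X (Suc k) \<omega> = j} = prob (B m) - prob (B m')"
    by (simp add: finite_measure_Diff)
  then show ?thesis
    using False unfolding B_def prob_maxX_le_X_eq m by (simp add: max_pmf_def Y_Suc left_diff_distrib)
qed

lemma xi_Suc_eq: "xi p X d (Suc k) \<omega> = xi_at d (maxX X k \<omega>) (X (Suc k) \<omega>)"
  unfolding xi_def indI_def xi_at_def maxX_Suc by simp

lemma xi_cube_measurable: "(\<lambda>\<omega>. \<bar>xi p X d (Suc k) \<omega>\<bar> ^ 3) \<in> borel_measurable M"
  unfolding xi_Suc_eq by (rule measurable_comp_nat_pair[OF maxX_measurable[OF X_measurable] X_measurable]) simp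

lemma nn_integral_xi_cube:
  "(\<integral>\<^sup>+\<omega>. ennreal (\<bar>xi p X d (Suc k) \<omega>\<bar> ^ 3) \<partial>M) = (\<Sum>m. ennreal (max_pmf k m) * cube_moment d m)"
proof -
  have "(\<integral>\<^sup>+\<omega>. ennreal (\<bar>xi p X d (Suc k) \<omega>\<bar> ^ 3) \<partial>M)
      = (\<Sum>m. \<Sum>j. ennreal (\<bar>xi_at d m j\<bar> ^ 3)
          * emeasure M {\<omega> \<in> space M. maxX X k \<omega> = m \<and> X (Suc k) \<omega> = j})"
    unfolding xi_Suc_eq
    by (rule nn_integral_comp_nat_pair[OF maxX_measurable[OF X_measurable] X_measurable])
  also have "\<dots> = (\<Sum>m. \<Sum>j. ennreal (\<bar>xi_at d m j\<bar> ^ 3) * ennreal (max_pmf k m * p j))"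
    by (simp add: emeasure_eq_measure prob_maxX_eq_X_eq)
  also have "\<dots> = (\<Sum>m. \<Sum>j. ennreal (max_pmf k m) * ennreal (p j * \<bar>xi_at d m j\<bar> ^ 3))"
    using max_pmf_nonneg p_pos
    by (intro suminf_cong) (simp add: ennreal_mult[symmetric] less_imp_le mult_ac)
  finally show ?thesis by (simp add: cube_moment_def)
qed

lemma sum_nn_integral_xi_cube:
  "(\<Sum>k<n. \<integral>\<^sup>+\<omega>. ennreal (\<bar>xi p X d (Suc k) \<omega>\<bar> ^ 3) \<partial>M)
    = (\<Sum>m. ennreal (occupation n m) * cube_moment d m)"
proof -
  have "(\<Sum>k<n. \<Sum>m. ennreal (max_pmf k m) * cube_moment d m)
      = (\<Sum>m. \<Sum>k<n. ennreal (max_pmf k m) * cube_moment d m)"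
    by (rule suminf_sum[OF summableI, symmetric])
  then show ?thesis
    by (simp add: nn_integral_xi_cube occupation_def max_pmf_nonneg flip: sum_distrib_right)
qed


lemma sigma_finite_subalgebra_filt: "sigma_finite_subalgebra M (filt M X k)"
proof (rule finite_measure_subalgebra_is_sigma_finite)
  define G where "G = {X i -` A \<inter> space M | i A. i \<in> {1..k}}"
  have "G \<subseteq> Pow (space M)" "G \<subseteq> sets M"
    unfolding G_def using X_measurable by (auto intro: measurable_sets)
  then have "subalgebra M (filt M X k)"
    unfolding subalgebra_def filt_def G_def[symmetric]
    by (simp add: space_measure_of_conv sets.sigma_sets_subset)
  then show "finite_measure_subalgebra M (filt M X k)"
    unfolding finite_measure_subalgebra_def finite_measure_subalgebra_axioms_def
    using finite_measure_axioms by simp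
qed

lemma Ssum_eq:
  "Ssum M p X d b n \<omega>
    = 1 / b n ^ 3 * (\<Sum>k<n. real_cond_exp M (filt M X k) (\<lambda>\<omega>. \<bar>xi p X d (Suc k) \<omega>\<bar> ^ 3) \<omega>)"
  unfolding Ssum_def by (simp add: sum.atLeast1_atMost_eq)

lemma integral_Ssum_le:
  assumes b: "b n > 0" and B: "B \<ge> 0"
    and bound: "(\<Sum>m. ennreal (occupation n m) * cube_moment d m) \<le> ennreal B"
  shows "integrable M (Ssum M p X d b n)" and "AE \<omega> in M. Ssum M p X d b n \<omega> \<ge> 0"
    and "integral\<^sup>L M (Ssum M p X d b n) \<le> B / b n ^ 3"
proof -
  define f where "f k \<omega> = \<bar>xi p X d (Suc k) \<omega>\<bar> ^ 3" for k \<omega>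
  define I where "I k = (\<integral>\<^sup>+\<omega>. ennreal (f k \<omega>) \<partial>M)" for k
  define CE where "CE k = real_cond_exp M (filt M X k) (f k)" for k
  have sum_I: "(\<Sum>k<n. I k) \<le> ennreal B"
    using sum_nn_integral_xi_cube[where n = n and d = d] bound unfolding I_def f_def by simp
  have I_finite: "I k < \<infinity>" if "k < n" for k
    using member_le_sum[of k "{..<n}" I] sum_I that by (auto simp: top.not_eq_extremum le_less_trans)
  have f_meas: "f k \<in> borel_measurable M" for k
    unfolding f_def by (rule xi_cube_measurable)
  have f_int: "integrable M (f k)" if "k < n" for k
    using I_finite[OF that] unfolding I_def by (intro integrableI_bounded[OF f_meas]) (simp add: f_def)
  have CE_int: "integrable M (CE k)" and CE_integral: "integral\<^sup>L M (CE k) = integral\<^sup>L M (f k)"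
    if "k < n" for k
    unfolding CE_def
    by (rule sigma_finite_subalgebra.real_cond_exp_int[OF sigma_finite_subalgebra_filt f_int[OF that]])+
  have f_integral: "integral\<^sup>L M (f k) = enn2real (I k)" for k
    unfolding I_def by (rule integral_eq_nn_integral[OF f_meas]) (simp add: f_def)
  have S_eq: "Ssum M p X d b n = (\<lambda>\<omega>. 1 / b n ^ 3 * (\<Sum>k<n. CE k \<omega>))"
    unfolding Ssum_eq CE_def f_def ..
  show "integrable M (Ssum M p X d b n)"
    unfolding S_eq using CE_int by (intro integrable_mult_right integrable_sum) auto
  have "AE \<omega> in M. \<forall>k\<in>{..<n}. CE k \<omega> \<ge> 0"
    unfolding CE_def using f_meas
    by (intro AE_finite_allI sigma_finite_subalgebra.real_cond_exp_pos[OF sigma_finite_subalgebra_filt])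
      (auto simp: f_def)
  then show "AE \<omega> in M. Ssum M p X d b n \<omega> \<ge> 0"
    unfolding S_eq by (rule eventually_mono) (use b in \<open>auto intro!: divide_nonneg_pos sum_nonneg\<close>)
  have "(\<Sum>k<n. enn2real (I k)) = enn2real (\<Sum>k<n. I k)"
    using enn2real_sum[of "{..<n}" I] I_finite by simp
  also have "\<dots> \<le> B"
    using enn2real_mono[OF sum_I] B by simp
  finally have "(\<Sum>k<n. enn2real (I k)) \<le> B" .
  then show "integral\<^sup>L M (Ssum M p X d b n) \<le> B / b n ^ 3"
    unfolding S_eq using CE_int CE_integral f_integral b by (simp add: integral_sum divide_right_mono)
qed

lemma prob_Ssum_gt_le:
  assumes "b n > 0" and e: "e > 0" and "B \<ge> 0"
    and "(\<Sum>m. ennreal (occupation n m) * cube_moment d m) \<le> ennreal B"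
  shows "measure M {\<omega> \<in> space M. \<bar>Ssum M p X d b n \<omega>\<bar> > e} \<le> B / (b n ^ 3 * e)"
proof -
  note S = integral_Ssum_le[where b = b and n = n and B = B and d = d, OF assms(1,3,4)]
  have "measure M {\<omega> \<in> space M. \<bar>Ssum M p X d b n \<omega>\<bar> > e}
      \<le> measure M {\<omega> \<in> space M. \<bar>Ssum M p X d b n \<omega>\<bar> \<ge> e}"
    using borel_measurable_integrable[OF S(1)] by (intro finite_measure_mono) auto
  also have "\<dots> \<le> (\<integral>\<omega>. \<bar>Ssum M p X d b n \<omega>\<bar> \<partial>M) / e"
    using S(1) e by (intro integral_Markov_inequality_measure[of _ _ "space M"]) auto
  also have "(\<integral>\<omega>. \<bar>Ssum M p X d b n \<omega>\<bar> \<partial>M) = integral\<^sup>L M (Ssum M p X d b n)"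
    using S(2) borel_measurable_integrable[OF S(1)] by (intro integral_cong_AE) auto
  also have "integral\<^sup>L M (Ssum M p X d b n) / e \<le> B / b n ^ 3 / e"
    using e by (intro divide_right_mono[OF S(3)]) simp
  finally show ?thesis by simp
qed

lemma conv_in_prob_Ssum_sqrt:
  fixes \<beta> :: "nat \<Rightarrow> real"
  assumes \<beta>: "filterlim \<beta> at_top sequentially"
    and "\<exists>A B. 0 \<le> A \<and> 0 \<le> B \<and> (\<forall>n\<ge>1.
      (\<Sum>m. ennreal (occupation n m) * cube_moment d m) \<le> ennreal (A + B * \<beta> n))"
  shows "conv_in_prob M (Ssum M p X d (\<lambda>n. sqrt (\<beta> n)))"
  unfolding conv_in_prob_def
proof (intro allI impI)
  fix e :: real
  assume e: "e > 0"
  obtain A B where AB: "0 \<le> A" "0 \<le> B"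
    and bound: "\<And>n. n \<ge> 1 \<Longrightarrow> (\<Sum>m. ennreal (occupation n m) * cube_moment d m) \<le> ennreal (A + B * \<beta> n)"
    using assms(2) by blast
  have "eventually (\<lambda>n. n \<ge> 1 \<and> \<beta> n \<ge> 1) sequentially"
    using eventually_ge_at_top[of 1] filterlim_at_top[THEN iffD1, OF \<beta>, rule_format, of 1]
    by eventually_elim auto
  then have upper: "eventually (\<lambda>n. measure M {\<omega> \<in> space M. \<bar>Ssum M p X d (\<lambda>n. sqrt (\<beta> n)) n \<omega>\<bar> > e}
      \<le> (A + B) / e * inverse (sqrt (\<beta> n))) sequentially"
  proof eventually_elim
    case (elim n)
    then have "measure M {\<omega> \<in> space M. \<bar>Ssum M p X d (\<lambda>n. sqrt (\<beta> n)) n \<omega>\<bar> > e}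
        \<le> (A + B * \<beta> n) / (sqrt (\<beta> n) ^ 3 * e)"
      using AB e by (intro prob_Ssum_gt_le bound) auto
    also have "\<dots> \<le> (A + B) / e * inverse (sqrt (\<beta> n))"
      using elim AB e by (intro affine_div_sqrt_cube_le) auto
    finally show ?case .
  qed
  have "(\<lambda>n. (A + B) / e * inverse (sqrt (\<beta> n))) \<longlonglongrightarrow> 0"
    by (rule tendsto_mult_right_zero)
      (rule tendsto_inverse_0_at_top[OF filterlim_compose[OF sqrt_at_top \<beta>]])
  then show "(\<lambda>n. measure M {\<omega> \<in> space M. \<bar>Ssum M p X d (\<lambda>n. sqrt (\<beta> n)) n \<omega>\<bar> > e}) \<longlonglongrightarrow> 0"
    by (intro tendsto_sandwich[OF _ upper tendsto_const]) simp_all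
qed

end

theorem proposition4p2:
  fixes M :: "'a measure" and X :: "nat \<Rightarrow> 'a \<Rightarrow> nat" and p :: "nat \<Rightarrow> real"
    and \<delta> :: nat and r :: real
  assumes "prob_space M"
    and meas: "\<And>i. X i \<in> measurable M (count_space UNIV)"
    and indep: "prob_space.indep_vars M (\<lambda>_. count_space UNIV) X {1..}"
    and ident: "\<And>i. i \<ge> 1 \<Longrightarrow>
                  distr M (count_space UNIV) (X i) = distr M (count_space UNIV) (X 1)"
    and p_def: "\<And>k. p k = measure M {\<omega> \<in> space M. X 1 \<omega> = k}"
    and p_pos: "\<And>k. p k > 0"
    and \<delta>_pos: "\<delta> > 0"
    and r_lim: "(\<lambda>k. rr p k) \<longlonglongrightarrow> r"
    and r_range: "r \<in> {0..1}"
  shows "(r < 1 \<longrightarrow>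
            conv_in_prob M (Ssum M p X \<delta> (\<lambda>n. sqrt (ln (real n)))))
       \<and> (r = 1 \<and> \<not> summable (\<lambda>k. ee p \<delta> (Suc k)) \<longrightarrow>
            conv_in_prob M (Ssum M p X \<delta>
               (\<lambda>n. sqrt (\<Sum>k=1..mm p (real n). ee p \<delta> k))))"
proof -
  have "p sums 1"
    unfolding p_def by (rule prob_space.prob_eq_sums_1[OF assms(1) meas])
  then interpret iid_maxima M p X
    using assms(1) p_pos
    by (intro iid_maxima.intro positive_law.intro iid_maxima_axioms.intro meas indep ident p_def)
  show ?thesis
  proof (intro conjI impI)
    assume "r < 1"
    then obtain c where "c > 0" "\<And>l. rr p l \<le> 1 - c"
      using rr_le_1_minus_const[OF r_lim] by blast
    then show "conv_in_prob M (Ssum M p X \<delta> (\<lambda>n. sqrt (ln (real n))))"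
      by (intro conv_in_prob_Ssum_sqrt[OF filterlim_compose[OF ln_at_top filterlim_real_sequentially]]
          occupation_cube_moment_le_ln)
  next
    assume "r = 1 \<and> \<not> summable (\<lambda>k. ee p \<delta> (Suc k))"
    moreover obtain m0 where "\<And>l. l \<ge> m0 \<Longrightarrow> 16 * Y (Suc l) \<le> Y l"
      using Y_eventually_decays r_lim calculation by blast
    ultimately show "conv_in_prob M (Ssum M p X \<delta> (\<lambda>n. sqrt (\<Sum>k=1..mm p (real n). ee p \<delta> k)))"
      by (intro conv_in_prob_Ssum_sqrt[OF filterlim_compose[OF sum_ee_at_top mm_at_top]]
          occupation_cube_moment_le_ee_sum \<delta>_pos) simp_all
  qed
qed

end
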